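(* Let $n\le2$ and write $f_n=\mathfrak P_\varphi(\lambda^n\varphi_\lambda)=\sum_{i\ge1}f^{(i)}\lambda^i$, the coefficients $f^{(i)}$ regarded as functions on the covering $\bar\tau_*$ via $\varphi^{(1)}=-y$, $\varphi^{(2)}=-x$, $\varphi^{(3)}=-z-\tfrac12y^2$. Put $Z=(z_y+y)f^{(1)}+z_xf^{(2)}-f^{(3)}$ and $\Phi^{(k)}=f^{(k)}+f^{(2)}\varphi^{(k)}_x+f^{(1)}\varphi^{(k)}_y$ for $k\ge4$. Then the vector field $\mathcal S=\sum_X\tilde D_X(Z)\,\partial/\partial z_X+\sum_{k\ge4}\Phi^{(k)}\,\partial/\partial\varphi^{(k)}$ (sum over all internal coordinates $z_X$, $\tilde D_X=\tilde D_x^a\tilde D_y^b$ for $X=x^ay^b$) is a nonlocal symmetry in $\bar\tau_*$, i.e. $[\mathcal S,\tilde D_x]=[\mathcal S,\tilde D_y]=0$.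
   Context: The Gibbons–Tsarev equation $\mathcal E$ is $z_{yy}+z_xz_{xy}-z_yz_{xx}+1=0$ with internal coordinates $x,y,z_X$ ($z_X=\partial^{a+b}z/\partial x^a\partial y^b$ for $X=x^ay^b$, $b\in\{0,1\}$) and total derivatives $D_x,D_y$. Put $\varphi^{(-1)}=1$, $\varphi^{(0)}=0$, $\varphi^{(1)}=-y$, $\varphi^{(2)}=-x$, $\varphi^{(3)}=-z-\tfrac12y^2$, let $\varphi^{(k)}$, $k\ge4$, be new coordinates and $\varphi(\lambda)=1/\lambda+\sum_{k\ge1}\varphi^{(k)}\lambda^k$, $\varphi_\lambda=d\varphi/d\lambda$. The covering $\bar\tau_*$ has coordinates $x,y,z_X,\varphi^{(k)}$ ($k\ge4$) and commuting total derivatives $\tilde D_x=D_x+\sum_{k\ge4}\varphi^{(k)}_x\partial/\partial\varphi^{(k)}$, $\tilde D_y=D_y+\sum_{k\ge4}\varphi^{(k)}_y\partial/\partial\varphi^{(k)}$, where $\varphi^{(k)}_x,\varphi^{(k)}_y$ (polynomials in $x,y,z,z_x,z_y,\varphi^{(4)},\dots,\varphi^{(k-1)}$) are uniquely determined by requiring, with $\varphi_x=\sum_{k\ge1}\tilde D_x(\varphi^{(k)})\lambda^k$, $\varphi_y=\sum_{k\ge1}\tilde D_y(\varphi^{(k)})\lambda^k$, that $(\varphi^2-z_x\varphi-z_y)\varphi_x=-1$ and $(\varphi^2-z_x\varphi-z_y)\varphi_y=-(\varphi-z_x)$ coefficientwise in $\lambda$. Notation $\mathfrak P_\varphi$: $w=1/\varphi(\lambda)=\lambda+O(\lambda^3)$;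 any Laurent series $F$ in $\lambda$ with finitely many negative powers is uniquely $F=\sum_{k\le m}c_k\varphi(\lambda)^k$ with $c_k$ independent of $\lambda$; $\mathfrak P_\varphi F=F-\sum_{k=0}^mc_k\varphi(\lambda)^k$, a power series in $\lambda$ without constant term. *)

theory Defs
  imports Complex_Main "HOL-Library.Poly_Mapping"
    "HOL-Computational_Algebra.Formal_Laurent_Series"
begin

text \<open>Coordinates: x, y, the internal coordinates z_X of the Gibbons-Tsarev
 equation (X = x^a y^b, b in {0,1}; ZC a False = z_{x^a}, ZC a True = z_{x^a y}),
 and the nonlocal coordinates PhiC j = phi^(j+4) (so k = j + 4 >= 4).\<close>

datatype coord = XC | YC | ZC nat bool | PhiC nat

text \<open>Functions on the covering: polynomials over the rationals in these
 coordinates (all objects in the statement are polynomial).\<close>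

type_synonym fn = "(coord \<Rightarrow>\<^sub>0 nat) \<Rightarrow>\<^sub>0 rat"

definition Var :: "coord \<Rightarrow> fn" where
  "Var v = Poly_Mapping.single (Poly_Mapping.single v 1) 1"

definition cst :: "rat \<Rightarrow> fn" where
  "cst c = Poly_Mapping.single 0 c"

definition vars :: "fn \<Rightarrow> coord set" where
  "vars p = \<Union> (Poly_Mapping.keys ` Poly_Mapping.keys p)"

definition pd :: "coord \<Rightarrow> fn \<Rightarrow> fn" where
  "pd v p = (\<Sum>m\<in>Poly_Mapping.keys p. Poly_Mapping.single (m - Poly_Mapping.single v 1)
                              (of_nat (Poly_Mapping.lookup m v) * Poly_Mapping.lookup p m))"

definition vf :: "(coord \<Rightarrow> fn) \<Rightarrow> fn \<Rightarrow> fn" where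
  "vf g p = (\<Sum>v\<in>vars p. g v * pd v p)"

definition Dx_eq :: "fn \<Rightarrow> fn" where
  "Dx_eq = vf (\<lambda>v. case v of XC \<Rightarrow> 1 | YC \<Rightarrow> 0 | ZC a b \<Rightarrow> Var (ZC (Suc a) b) | PhiC j \<Rightarrow> 0)"

text \<open>z_yy expressed through the equation: z_yy = z_y z_xx - z_x z_xy - 1.\<close>
definition zyy :: fn where
  "zyy = Var (ZC 0 True) * Var (ZC 2 False) - Var (ZC 1 False) * Var (ZC 1 True) - 1"

text \<open>Covering total derivatives, given the values ax j = phi^(j+4)_x,
 ay j = phi^(j+4)_y.\<close>
definition Dtx :: "(nat \<Rightarrow> fn) \<Rightarrow> fn \<Rightarrow> fn" where
  "Dtx ax = vf (\<lambda>v. case v of XC \<Rightarrow> 1 | YC \<Rightarrow> 0 | ZC a b \<Rightarrow> Var (ZC (Suc a) b)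
                           | PhiC j \<Rightarrow> ax j)"

definition Dty :: "(nat \<Rightarrow> fn) \<Rightarrow> fn \<Rightarrow> fn" where
  "Dty ay = vf (\<lambda>v. case v of XC \<Rightarrow> 0 | YC \<Rightarrow> 1
                           | ZC a b \<Rightarrow> (if b then (Dx_eq ^^ a) zyy else Var (ZC a True))
                           | PhiC j \<Rightarrow> ay j)"

definition phic :: "nat \<Rightarrow> fn" where
  "phic k = (if k = 0 then 0 else if k = 1 then - Var YC else if k = 2 then - Var XC
             else if k = 3 then - Var (ZC 0 False) - cst (1/2) * Var YC ^ 2
             else Var (PhiC (k - 4)))"

definition phi :: "fn fls" where
  "phi = fls_X_inv + fps_to_fls (Abs_fps phic)"

definition dser :: "(fn \<Rightarrow> fn) \<Rightarrow> fn fls" where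
  "dser D = fps_to_fls (Abs_fps (\<lambda>k. if k = 0 then 0 else D (phic k)))"

definition Qphi :: "fn fls" where
  "Qphi = phi ^ 2 - fls_const (Var (ZC 1 False)) * phi - fls_const (Var (ZC 0 True))"

text \<open>phi^(k)_x and phi^(k)_y (indexed by j = k - 4), uniquely determined by
 (phi^2 - z_x phi - z_y) phi_x = -1 and (phi^2 - z_x phi - z_y) phi_y = -(phi - z_x).\<close>
definition phix :: "nat \<Rightarrow> fn" where
  "phix = (THE ax. Qphi * dser (Dtx ax) = - 1)"

definition phiy :: "nat \<Rightarrow> fn" where
  "phiy = (THE ay. Qphi * dser (Dty ay) = - (phi - fls_const (Var (ZC 1 False))))"

definition tDx :: "fn \<Rightarrow> fn" where "tDx = Dtx phix"
definition tDy :: "fn \<Rightarrow> fn" where "tDy = Dty phiy"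

text \<open>P_phi F = F - sum_{k=0}^m c_k phi^k, where F = sum_{k<=m} c_k phi^k;
 equivalently the unique power series G without constant term such that
 F - G is a polynomial in phi with lambda-independent coefficients.\<close>
definition Pphi :: "fn fls \<Rightarrow> fn fls" where
  "Pphi F = (THE G. (\<forall>i\<le>0. fls_nth G i = 0) \<and>
       (\<exists>(c::nat \<Rightarrow> fn) m. F = G + (\<Sum>k\<le>m. fls_const (c k) * phi ^ k)))"

definition fco :: "int \<Rightarrow> nat \<Rightarrow> fn" where
  "fco n i = fls_nth (Pphi (fls_X_intpow n * fls_deriv phi)) (int i)"

definition Zgen :: "int \<Rightarrow> fn" where
  "Zgen n = (Var (ZC 0 True) + Var YC) * fco n 1 + Var (ZC 1 False) * fco n 2 - fco n 3"

definition PhiS :: "int \<Rightarrow> nat \<Rightarrow> fn" where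
  "PhiS n j = fco n (j + 4) + fco n 2 * phix j + fco n 1 * phiy j"

definition Sfield :: "int \<Rightarrow> fn \<Rightarrow> fn" where
  "Sfield n = vf (\<lambda>v. case v of XC \<Rightarrow> 0 | YC \<Rightarrow> 0
                         | ZC a b \<Rightarrow> (tDx ^^ a) ((tDy ^^ (if b then 1 else 0)) (Zgen n))
                         | PhiC j \<Rightarrow> PhiS n j)"

end

theory Submission
  imports Defs
begin

text \<open>
  Write \<open>P\<close> and \<open>R\<close> for the series \<open>\<phi>_x\<close> and \<open>\<phi>_y\<close> and put
  \<open>Q = \<phi>^2 - z_x \<phi> - z_y\<close>, so that \<open>Q P = -1\<close> and \<open>R = (\<phi> - z_x) P\<close>.
  The commutators \<open>C_x = [S, D_x]\<close> and \<open>C_y = [S, D_y]\<close> are derivations; \<open>C_x\<close>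
  vanishes on \<open>x\<close>, \<open>y\<close> and all \<open>z_X\<close>, \<open>C_y\<close> on \<open>x\<close>, \<open>y\<close> and the
  \<open>z_{x^a}\<close>, and on the nonlocal coordinates their values are the coefficients of the
  series \<open>W_x = C_x(\<phi>)\<close>, \<open>W_y = C_y(\<phi>)\<close>, which start at \<open>\<lambda>^4\<close>.
  The choice of \<open>Z\<close> and \<open>\<Phi>^(k)\<close> makes \<open>S(\<phi>) = f_n + f^(2) P + f^(1) R\<close>.
  Differentiating \<open>Q P = -1\<close> and \<open>Q R = -(\<phi> - z_x)\<close> along \<open>S\<close>, \<open>D_x\<close>, \<open>D_y\<close>
  and \<open>d/d\<lambda>\<close> shows that \<open>Q^2 W_x\<close> and \<open>Q^2 W_y\<close> are polynomials in \<open>\<phi>\<close> with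
  \<open>\<lambda>\<close>-independent coefficients: the contributions of \<open>\<lambda>^n \<phi>_\<lambda>\<close> cancel because
  the total derivatives commute with \<open>d/d\<lambda>\<close>, and \<open>Q^2\<close> clears all powers of \<open>P\<close>.
  Since \<open>Q^2\<close> starts at \<open>\<lambda>^(-4)\<close>, these polynomials are constants \<open>m_x\<close>, \<open>m_y\<close>.
  The Jacobi identity \<open>[C_x, D_y] = [C_y, D_x]\<close>, applied to \<open>\<phi>\<close>, then becomes a
  polynomial identity in \<open>\<phi>\<close> whose coefficients force \<open>m_x = m_y = C_y(z_y) = 0\<close>.
  Hence \<open>W_x = W_y = 0\<close>, so \<open>C_x = 0\<close>, and then \<open>C_y\<close> also vanishes on the
  \<open>z_{x^a y}\<close> because \<open>C_y(z_y) = 0\<close>.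
\<close>

section \<open>Polynomials in the coordinates\<close>

fun coord_code :: "coord \<Rightarrow> nat" where
  "coord_code XC = 0"
| "coord_code YC = 1"
| "coord_code (ZC a b) = 2 + 3 * (2 * a + (if b then 1 else 0))"
| "coord_code (PhiC j) = 3 + 3 * j"

lemma inj_coord_code: "inj coord_code"
proof (rule injI)
  fix u v assume "coord_code u = coord_code v"
  then show "u = v"
    by (cases u; cases v; auto split: if_splits; presburger)
qed

text \<open>Any linear order on the coordinates makes \<^typ>\<open>fn\<close> an integral domain
  (the \<open>idom\<close> instance of \<open>Poly_Mapping\<close> needs ordered keys).\<close>

instantiation coord :: linorder
begin
definition "less_eq_coord u v \<longleftrightarrow> coord_code u \<le> coord_code v"
definition "less_coord u v \<longleftrightarrow> coord_code u < coord_code v"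
instance
  by standard (auto simp: less_eq_coord_def less_coord_def dest: injD[OF inj_coord_code])
end

lemma poly_mapping_induct_single [case_names zero add_single]:
  assumes "P 0" and "\<And>p k c. P p \<Longrightarrow> P (p + Poly_Mapping.single k c)"
  shows "P p"
proof (induction p rule: update_induct)
  case (update f a b)
  have "Poly_Mapping.update a b f = f + Poly_Mapping.single a b"
    using update.hyps(1)
    by (intro poly_mapping_eqI) (auto simp: lookup_update lookup_add lookup_single in_keys_iff when_def)
  then show ?case using assms(2)[OF update.IH] by simp
qed (rule assms(1))

lemma cst_0 [simp]: "cst 0 = 0" and cst_1 [simp]: "cst 1 = 1"
  by (simp_all add: cst_def)

lemma cst_mult: "cst (a * b) = cst a * cst b"
  by (simp add: cst_def mult_single)

lemma cst_of_int [simp]: "cst (of_int k) = of_int k"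
  by (simp add: cst_def)

lemma Var_power: "Var v ^ k = Poly_Mapping.single (Poly_Mapping.single v k) 1"
proof (induction k)
  case (Suc k)
  have "Poly_Mapping.single v (Suc k) = Poly_Mapping.single v 1 + Poly_Mapping.single v k"
    by (simp flip: single_add)
  with Suc show ?case by (simp add: Var_def mult_single)
qed simp

lemma fn_induct [case_names cst Var add mult]:
  assumes cst: "\<And>c. P (cst c)" and Var: "\<And>v. P (Var v)"
    and add: "\<And>p q. P p \<Longrightarrow> P q \<Longrightarrow> P (p + q)"
    and mult: "\<And>p q. P p \<Longrightarrow> P q \<Longrightarrow> P (p * q)"
  shows "P (p :: fn)"
proof -
  have P_Var_power: "P (Var v ^ k)" for v k
    by (induction k) (use cst[of 1] in \<open>auto intro: mult Var\<close>)
  have monomial: "P (Poly_Mapping.single m c)" for m c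
  proof (induction m rule: poly_mapping_induct_single)
    case zero
    then show ?case using cst[of c] by (simp add: cst_def)
  next
    case (add_single m v k)
    have "Poly_Mapping.single (m + Poly_Mapping.single v k) c = Poly_Mapping.single m c * Var v ^ k"
      by (simp add: Var_power mult_single)
    then show ?case using mult[OF add_single P_Var_power] by simp
  qed
  show ?thesis
    by (induction p rule: poly_mapping_induct_single) (use cst[of 0] in \<open>auto intro: add monomial\<close>)
qed

lemma pd_superset:
  assumes "finite A" "Poly_Mapping.keys p \<subseteq> A"
  shows "pd v p = (\<Sum>m\<in>A. Poly_Mapping.single (m - Poly_Mapping.single v 1)
                              (of_nat (Poly_Mapping.lookup m v) * Poly_Mapping.lookup p m))"
  unfolding pd_def
  by (rule sum.mono_neutral_left) (use assms in \<open>auto simp: in_keys_iff\<close>)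

lemma pd_zero [simp]: "pd v 0 = 0"
  by (simp add: pd_def)

lemma pd_add: "pd v (p + q) = pd v p + pd v q"
proof -
  let ?A = "Poly_Mapping.keys p \<union> Poly_Mapping.keys q"
  show ?thesis
    using keys_add[of p q]
    by (simp add: pd_superset[of ?A] lookup_add distrib_left single_add sum.distrib)
qed

lemma pd_single:
  "pd v (Poly_Mapping.single m c) =
     Poly_Mapping.single (m - Poly_Mapping.single v 1) (of_nat (Poly_Mapping.lookup m v) * c)"
  by (simp add: pd_def)

lemma single_diff_add:
  fixes a b :: "'a \<Rightarrow>\<^sub>0 nat"
  assumes "Poly_Mapping.lookup a v > 0"
  shows "a + b - Poly_Mapping.single v 1 = (a - Poly_Mapping.single v 1) + b"
  using assms by (intro poly_mapping_eqI) (auto simp: lookup_add lookup_minus lookup_single when_def)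

lemma pd_mult_single:
  "pd v (Poly_Mapping.single a c * Poly_Mapping.single b d) =
     pd v (Poly_Mapping.single a c) * Poly_Mapping.single b d
     + Poly_Mapping.single a c * pd v (Poly_Mapping.single b d)"
proof -
  let ?m = "a + b - Poly_Mapping.single v 1"
  \<comment> \<open>if \<open>v\<close> does not occur in a monomial its coefficient vanishes, so the truncated
    subtraction of exponents is harmless\<close>
  have left: "Poly_Mapping.single (a - Poly_Mapping.single v 1 + b) (of_nat (Poly_Mapping.lookup a v) * c * d)
      = Poly_Mapping.single ?m (of_nat (Poly_Mapping.lookup a v) * c * d :: rat)"
    by (cases "Poly_Mapping.lookup a v > 0") (simp_all only: single_diff_add, simp_all)
  have right: "Poly_Mapping.single (a + (b - Poly_Mapping.single v 1)) (c * (of_nat (Poly_Mapping.lookup b v) * d))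
      = Poly_Mapping.single ?m (of_nat (Poly_Mapping.lookup b v) * c * d :: rat)"
  proof (cases "Poly_Mapping.lookup b v > 0")
    case True
    then have "?m = a + (b - Poly_Mapping.single v 1)"
      using single_diff_add[of b v a] by (simp add: add.commute)
    then show ?thesis by (simp add: mult_ac)
  qed simp
  have "pd v (Poly_Mapping.single a c * Poly_Mapping.single b d)
      = Poly_Mapping.single ?m (of_nat (Poly_Mapping.lookup a v) * c * d)
        + Poly_Mapping.single ?m (of_nat (Poly_Mapping.lookup b v) * c * d)"
    by (simp add: mult_single pd_single lookup_add algebra_simps flip: single_add)
  also have "\<dots> = pd v (Poly_Mapping.single a c) * Poly_Mapping.single b d
      + Poly_Mapping.single a c * pd v (Poly_Mapping.single b d)"
    by (simp only: mult_single pd_single left right)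
  finally show ?thesis .
qed

lemma pd_mult: "pd v (p * q) = pd v p * q + p * pd v (q :: fn)"
proof (induction p rule: poly_mapping_induct_single)
  case (add_single p a c)
  have "pd v (Poly_Mapping.single a c * q) =
      pd v (Poly_Mapping.single a c) * q + Poly_Mapping.single a c * pd v q"
    by (induction q rule: poly_mapping_induct_single)
      (simp_all add: distrib_left distrib_right pd_add pd_mult_single)
  with add_single.IH show ?case
    by (simp add: distrib_right pd_add)
qed simp

lemma pd_Var: "pd w (Var v) = (if w = v then 1 else 0)"
  by (auto simp: Var_def pd_single lookup_single)

lemma finite_vars [simp]: "finite (vars p)"
  by (simp add: vars_def)

lemma pd_notin_vars: "v \<notin> vars p \<Longrightarrow> pd v p = 0"
  unfolding pd_def vars_def by (rule sum.neutral) (auto simp: in_keys_iff)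

lemma vars_add: "vars (p + q) \<subseteq> vars p \<union> vars q"
  unfolding vars_def using keys_add[of p q] by auto

lemma vars_uminus [simp]: "vars (- p) = vars p"
  by (simp add: vars_def)

lemma vars_diff: "vars (p - q) \<subseteq> vars p \<union> vars q"
  using vars_add[of p "- q"] by simp

lemma vars_mult: "vars (p * q) \<subseteq> vars p \<union> vars (q :: fn)"
proof
  fix v assume "v \<in> vars (p * q)"
  then obtain m where m: "m \<in> Poly_Mapping.keys (p * q)" "v \<in> Poly_Mapping.keys m"
    by (auto simp: vars_def)
  then obtain a b where "m = a + b" "a \<in> Poly_Mapping.keys p" "b \<in> Poly_Mapping.keys q"
    using keys_mult[of p q] by blast
  moreover have "v \<in> Poly_Mapping.keys a \<or> v \<in> Poly_Mapping.keys b"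
    using m(2) keys_add[of a b] \<open>m = a + b\<close> by auto
  ultimately show "v \<in> vars p \<union> vars q"
    by (auto simp: vars_def)
qed

lemma vars_sum: "vars (sum f A) \<subseteq> (\<Union>a\<in>A. vars (f a))"
proof (induction A rule: infinite_finite_induct)
  case (insert x F)
  then show ?case using vars_add[of "f x" "sum f F"] by auto
qed (auto simp: vars_def)

lemma vars_pd: "vars (pd v p) \<subseteq> vars p"
proof -
  have "vars (Poly_Mapping.single (m - Poly_Mapping.single v 1) c) \<subseteq> vars p"
    if "m \<in> Poly_Mapping.keys p" for m c
  proof -
    have "vars (Poly_Mapping.single (m - Poly_Mapping.single v 1) c)
        \<subseteq> Poly_Mapping.keys (m - Poly_Mapping.single v 1)"
      by (simp add: vars_def)
    also have "\<dots> \<subseteq> Poly_Mapping.keys m"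
      by (auto simp: in_keys_iff lookup_minus)
    also have "\<dots> \<subseteq> vars p"
      using that by (auto simp: vars_def)
    finally show ?thesis .
  qed
  then have "(\<Union>m\<in>Poly_Mapping.keys p. vars (Poly_Mapping.single (m - Poly_Mapping.single v 1)
      (of_nat (Poly_Mapping.lookup m v) * Poly_Mapping.lookup p m))) \<subseteq> vars p"
    by blast
  with vars_sum show ?thesis
    unfolding pd_def by (rule subset_trans)
qed

lemma vars_Var [simp]: "vars (Var v) = {v}"
  by (simp add: Var_def vars_def)

lemma vars_0 [simp]: "vars 0 = {}" and vars_1 [simp]: "vars 1 = {}"
  by (simp_all add: vars_def)

lemma vf_superset:
  assumes "finite A" "vars p \<subseteq> A"
  shows "vf g p = (\<Sum>v\<in>A. g v * pd v p)"
  unfolding vf_def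
  by (rule sum.mono_neutral_left) (use assms in \<open>auto simp: pd_notin_vars\<close>)

lemma vf_add: "vf g (p + q) = vf g p + vf g q"
proof -
  let ?A = "vars p \<union> vars q"
  show ?thesis
    by (simp add: vf_superset[of ?A] vf_superset[OF _ vars_add] pd_add distrib_left sum.distrib)
qed

lemma vf_mult: "vf g (p * q) = vf g p * q + p * vf g q"
proof -
  let ?A = "vars p \<union> vars q"
  have "vf g (p * q) = (\<Sum>v\<in>?A. g v * (pd v p * q + p * pd v q))"
    by (simp add: vf_superset[OF _ vars_mult] pd_mult)
  also have "\<dots> = (\<Sum>v\<in>?A. g v * pd v p) * q + p * (\<Sum>v\<in>?A. g v * pd v q)"
    by (simp add: distrib_left sum.distrib sum_distrib_left sum_distrib_right mult.assoc mult.left_commute)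
  also have "\<dots> = vf g p * q + p * vf g q"
    by (simp add: vf_superset[of ?A])
  finally show ?thesis .
qed

lemma vf_Var [simp]: "vf g (Var v) = g v"
  by (simp add: vf_def pd_Var)

lemma vf_cong: "(\<And>v. v \<in> vars p \<Longrightarrow> g v = h v) \<Longrightarrow> vf g p = vf h p"
  unfolding vf_def by (rule sum.cong) auto

lemma vars_vf: "vars (vf g p) \<subseteq> vars p \<union> (\<Union>v\<in>vars p. vars (g v))"
proof -
  have "vars (vf g p) \<subseteq> (\<Union>v\<in>vars p. vars (g v * pd v p))"
    unfolding vf_def by (rule vars_sum)
  also have "\<dots> \<subseteq> vars p \<union> (\<Union>v\<in>vars p. vars (g v))"
  proof (rule UN_least)
    fix v assume "v \<in> vars p"
    then show "vars (g v * pd v p) \<subseteq> vars p \<union> (\<Union>v\<in>vars p. vars (g v))"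
      using vars_mult[of "g v" "pd v p"] vars_pd[of v p] by auto
  qed
  finally show ?thesis .
qed

section \<open>Derivations\<close>

definition derivation :: "('a::comm_ring_1 \<Rightarrow> 'a) \<Rightarrow> bool" where
  "derivation D \<longleftrightarrow> (\<forall>p q. D (p + q) = D p + D q) \<and> (\<forall>p q. D (p * q) = D p * q + p * D q)"

context
  fixes D :: "'a::comm_ring_1 \<Rightarrow> 'a"
  assumes D: "derivation D"
begin

lemma derivation_add: "D (p + q) = D p + D q"
  using D by (simp add: derivation_def)

lemma derivation_mult: "D (p * q) = D p * q + p * D q"
  using D by (simp add: derivation_def)

lemma derivation_zero: "D 0 = 0"
  using derivation_add[of 0 0] by simp

lemma derivation_one: "D 1 = 0"
  using derivation_mult[of 1 1] by simp

lemma derivation_uminus: "D (- p) = - D p"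
  using derivation_add[of p "- p"] by (simp add: derivation_zero eq_neg_iff_add_eq_0 add.commute)

lemma derivation_diff: "D (p - q) = D p - D q"
  using derivation_add[of p "- q"] by (simp add: derivation_uminus)

lemma derivation_sum: "D (sum f A) = (\<Sum>a\<in>A. D (f a))"
  by (induction A rule: infinite_finite_induct) (simp_all add: derivation_add derivation_zero)

lemma derivation_of_nat: "D (of_nat k) = 0"
  by (induction k) (simp_all add: derivation_add derivation_zero derivation_one)

lemma derivation_of_int: "D (of_int k) = 0"
  by (cases k rule: int_cases) (simp_all add: derivation_uminus derivation_diff derivation_one derivation_of_nat)

lemma derivation_numeral: "D (numeral k) = 0"
  using derivation_of_nat[of "numeral k"] by simp

lemma derivation_power2: "D (p ^ 2) = 2 * p * D p"
  by (simp add: power2_eq_square derivation_mult algebra_simps)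

lemmas derivation_simps = derivation_add derivation_mult derivation_diff derivation_uminus
  derivation_zero derivation_one derivation_numeral derivation_power2

end

lemma derivation_commutator:
  assumes "derivation D\<^sub>1" and "derivation D\<^sub>2"
  shows "derivation (\<lambda>p. D\<^sub>1 (D\<^sub>2 p) - D\<^sub>2 (D\<^sub>1 p))"
  unfolding derivation_def
  by (simp add: derivation_add[OF assms(1)] derivation_add[OF assms(2)]
      derivation_mult[OF assms(1)] derivation_mult[OF assms(2)] algebra_simps)

lemma derivation_cst:
  assumes "derivation D"
  shows "D (cst c) = 0"
proof -
  \<comment> \<open>for \<open>c = a / b\<close>: \<open>b * D c = D (b * c) = D a = 0\<close>\<close>
  obtain a b where c: "c = of_int a / of_int b" and b: "b \<noteq> 0"
    by (cases c) (simp add: Fract_of_int_quotient)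
  have "of_int b * cst c = cst (of_int a)"
    using b by (simp flip: cst_of_int cst_mult add: c)
  then have "of_int b * D (cst c) = 0"
    using derivation_of_int[OF assms] derivation_mult[OF assms, of "of_int b" "cst c"] by simp
  moreover have "(of_int b :: fn) \<noteq> 0"
    using b by simp
  ultimately show ?thesis
    by simp
qed

lemma derivation_vf: "derivation (vf g)"
  by (simp add: derivation_def vf_add vf_mult)

lemma derivation_pd: "derivation (pd v)"
  by (simp add: derivation_def pd_add pd_mult)

lemma derivation_eq_vf:
  assumes "derivation D"
  shows "D p = vf (\<lambda>v. D (Var v)) p"
proof (induction p rule: fn_induct)
  case (cst c)
  then show ?case by (simp add: derivation_cst[OF assms] derivation_cst[OF derivation_vf])
next
  case (add p q)
  then show ?case by (simp add: derivation_add[OF assms] vf_add)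
next
  case (mult p q)
  then show ?case by (simp add: derivation_mult[OF assms] vf_mult)
qed simp

lemma derivation_eqI:
  assumes "derivation D\<^sub>1" "derivation D\<^sub>2" and "\<And>v. v \<in> vars p \<Longrightarrow> D\<^sub>1 (Var v) = D\<^sub>2 (Var v)"
  shows "D\<^sub>1 p = D\<^sub>2 p"
proof -
  have "D\<^sub>1 p = vf (\<lambda>v. D\<^sub>1 (Var v)) p"
    by (rule derivation_eq_vf[OF assms(1)])
  also have "\<dots> = vf (\<lambda>v. D\<^sub>2 (Var v)) p"
    by (rule vf_cong) (rule assms(3))
  also have "\<dots> = D\<^sub>2 p"
    by (rule derivation_eq_vf[OF assms(2), symmetric])
  finally show ?thesis .
qed

lemma derivation_eq_0I:
  assumes "derivation D" and "\<And>v. D (Var v) = 0"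
  shows "D p = 0"
proof -
  have "D p = vf (\<lambda>v. D (Var v)) p"
    by (rule derivation_eq_vf[OF assms(1)])
  then show ?thesis
    by (simp add: assms(2) vf_def)
qed

section \<open>Coefficientwise maps of Laurent series\<close>

unbundle fps_syntax

lemma fls_mult_nth_bounds:
  fixes f g :: "'a::comm_ring_1 fls"
  assumes "\<And>i. i < a \<Longrightarrow> f $$ i = 0" and "\<And>i. i < b \<Longrightarrow> g $$ i = 0"
  shows "(f * g) $$ n = (\<Sum>i=a..n-b. f $$ i * g $$ (n - i))"
proof (cases "f = 0 \<or> g = 0")
  case False
  then have a: "a \<le> fls_subdegree f" and b: "b \<le> fls_subdegree g"
    using assms fls_subdegree_geI by blast+
  have "(f * g) $$ n = (\<Sum>i=fls_subdegree f..n - fls_subdegree g. f $$ i * g $$ (n - i))"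
    by (rule fls_times_nth(2))
  also have "\<dots> = (\<Sum>i=a..n-b. f $$ i * g $$ (n - i))"
    by (rule sum.mono_neutral_left) (use a b in \<open>auto simp: not_le\<close>)
  finally show ?thesis .
qed auto

lemma derivation_fls_deriv: "derivation (fls_deriv :: 'a::comm_ring_1 fls \<Rightarrow> 'a fls)"
  by (simp add: derivation_def add.commute)

definition fls_map :: "('a::zero \<Rightarrow> 'b::zero) \<Rightarrow> 'a fls \<Rightarrow> 'b fls" where
  "fls_map f F = Abs_fls (\<lambda>i. f (F $$ i))"

lemma fls_map_nth:
  assumes "f 0 = 0"
  shows "fls_map f F $$ i = f (F $$ i)"
proof -
  have "\<forall>\<^sub>\<infinity>n. f (F $$ (- int n)) = 0"
    using MOST_fls_neg_nth_eq_0[of F] by (rule MOST_mono) (simp add: assms)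
  then show ?thesis
    unfolding fls_map_def by simp
qed

lemma fls_map_const: "f 0 = 0 \<Longrightarrow> fls_map f (fls_const c) = fls_const (f c)"
  by (rule fls_eqI) (simp add: fls_map_nth)

lemma fls_map_commutator:
  assumes "f 0 = 0" "g 0 = 0"
  shows "fls_map (\<lambda>p. f (g p) - g (f p)) F = fls_map f (fls_map g F) - fls_map g (fls_map f F)"
  by (rule fls_eqI) (simp add: fls_map_nth assms)

context
  fixes D :: "'a::comm_ring_1 \<Rightarrow> 'a"
  assumes D: "derivation D"
begin

lemma derivation_fls_map_nth [simp]: "fls_map D F $$ i = D (F $$ i)"
  by (simp add: fls_map_nth derivation_zero[OF D])

lemma derivation_fls_map: "derivation (fls_map D)"
  unfolding derivation_def
proof (intro conjI allI)
  fix F G :: "'a fls"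
  show "fls_map D (F + G) = fls_map D F + fls_map D G"
    by (rule fls_eqI) (simp add: derivation_add[OF D])
  show "fls_map D (F * G) = fls_map D F * G + F * fls_map D G"
  proof (rule fls_eqI)
    fix n
    obtain a where a: "\<forall>i<a. F $$ i = 0" by (rule fls_nth_vanishes_belowE)
    obtain b where b: "\<forall>i<b. G $$ i = 0" by (rule fls_nth_vanishes_belowE)
    have "fls_map D (F * G) $$ n = D (\<Sum>i=a..n-b. F $$ i * G $$ (n - i))"
      using fls_mult_nth_bounds[of a F b G n] a b by simp
    also have "\<dots> = (\<Sum>i=a..n-b. D (F $$ i) * G $$ (n - i)) + (\<Sum>i=a..n-b. F $$ i * D (G $$ (n - i)))"
      by (simp add: derivation_sum[OF D] derivation_mult[OF D] sum.distrib)
    also have "\<dots> = (fls_map D F * G + F * fls_map D G) $$ n"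
      using fls_mult_nth_bounds[of a "fls_map D F" b G n] fls_mult_nth_bounds[of a F b "fls_map D G" n]
        a b by (simp add: derivation_zero[OF D])
    finally show "fls_map D (F * G) $$ n = (fls_map D F * G + F * fls_map D G) $$ n" .
  qed
qed

lemmas fls_map_simps =
  derivation_simps[OF derivation_fls_map] fls_map_const[of D, OF derivation_zero[OF D]]

lemma fls_map_deriv: "fls_map D (fls_deriv F) = fls_deriv (fls_map D F)"
  by (rule fls_eqI) (simp add: derivation_mult[OF D] derivation_add[OF D] derivation_of_int[OF D] derivation_one[OF D])

lemma fls_map_X_intpow: "fls_map D (fls_X_intpow k) = 0"
  by (rule fls_eqI) (simp add: derivation_zero[OF D] derivation_one[OF D])

end

section \<open>Polynomials evaluated at a Laurent series\<close>

definition poly_fls :: "'a::comm_ring_1 poly \<Rightarrow> 'a fls \<Rightarrow> 'a fls" where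
  "poly_fls q F = poly (map_poly fls_const q) F"

lemma poly_fls_0 [simp]: "poly_fls 0 F = 0"
  by (simp add: poly_fls_def)

lemma poly_fls_pCons: "poly_fls (pCons a q) F = fls_const a + F * poly_fls q F"
  by (simp add: poly_fls_def map_poly_pCons)

lemma poly_fls_const: "poly_fls [:c:] F = fls_const c"
  by (simp add: poly_fls_pCons)

lemma poly_fls_add: "poly_fls (p + q) F = poly_fls p F + poly_fls q F"
proof -
  have "map_poly fls_const (p + q) = map_poly fls_const p + map_poly fls_const q"
    by (rule poly_eqI) (simp add: coeff_map_poly fls_plus_const)
  then show ?thesis
    by (simp add: poly_fls_def)
qed

lemma poly_fls_uminus: "poly_fls (- p) F = - poly_fls p F"
  using poly_fls_add[of p "- p" F] by (simp add: eq_neg_iff_add_eq_0 add.commute)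

lemma poly_fls_diff: "poly_fls (p - q) F = poly_fls p F - poly_fls q F"
  using poly_fls_add[of p "- q" F] by (simp add: poly_fls_uminus)

lemma poly_fls_mult: "poly_fls (p * q) F = poly_fls p F * poly_fls q F"
proof (induction p)
  case (pCons a p)
  have "poly_fls (smult a q) F = fls_const a * poly_fls q F"
    by (simp add: poly_fls_def map_poly_smult)
  with pCons.IH show ?case
    by (simp add: poly_fls_add poly_fls_pCons algebra_simps)
qed simp

lemma poly_fls_monom: "poly_fls (monom c k) F = fls_const c * F ^ k"
  by (induction k) (simp_all add: monom_0 monom_Suc poly_fls_const poly_fls_pCons)

lemma poly_fls_sum: "poly_fls (sum f A) F = (\<Sum>a\<in>A. poly_fls (f a) F)"
  by (induction A rule: infinite_finite_induct) (simp_all add: poly_fls_add)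

lemma fls_map_poly_fls:
  assumes D: "derivation D"
  shows "fls_map D (poly_fls q F) = poly_fls (map_poly D q) F + poly_fls (pderiv q) F * fls_map D F"
proof (induction q)
  case 0
  then show ?case
    by (simp add: derivation_zero[OF derivation_fls_map[OF D]])
next
  case (pCons a q)
  then show ?case
    by (simp add: poly_fls_pCons fls_map_simps[OF D] map_poly_pCons derivation_zero[OF D]
        pderiv_pCons poly_fls_add algebra_simps)
qed

definition poly_fls_range :: "'a::comm_ring_1 fls \<Rightarrow> 'a fls set" where
  "poly_fls_range F = range (\<lambda>q. poly_fls q F)"

lemma poly_fls_range_intros:
  "poly_fls q F \<in> poly_fls_range F"
  "fls_const c \<in> poly_fls_range F"
  "numeral k \<in> poly_fls_range F"
  "F \<in> poly_fls_range F"
  "G \<in> poly_fls_range F \<Longrightarrow> H \<in> poly_fls_range F \<Longrightarrow> G + H \<in> poly_fls_range F"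
  "G \<in> poly_fls_range F \<Longrightarrow> H \<in> poly_fls_range F \<Longrightarrow> G - H \<in> poly_fls_range F"
  "G \<in> poly_fls_range F \<Longrightarrow> H \<in> poly_fls_range F \<Longrightarrow> G * H \<in> poly_fls_range F"
  "G \<in> poly_fls_range F \<Longrightarrow> - G \<in> poly_fls_range F"
proof -
  show const: "fls_const c \<in> poly_fls_range F" for c
    using poly_fls_const[of c F] unfolding poly_fls_range_def by (metis rangeI)
  show "numeral k \<in> poly_fls_range F"
    using const[of "numeral k"] by (simp add: fls_const_numeral)
  show "F \<in> poly_fls_range F"
    using poly_fls_monom[of 1 1 F] unfolding poly_fls_range_def by (metis fls_const_1 mult_1 power_one_right rangeI)
qed (auto simp: poly_fls_range_def poly_fls_add poly_fls_diff poly_fls_mult poly_fls_uminus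
     simp flip: poly_fls_add poly_fls_diff poly_fls_mult poly_fls_uminus)

locale simple_pole =
  fixes F :: "'a::comm_ring_1 fls"
  assumes nth_below: "i < -1 \<Longrightarrow> F $$ i = 0"
    and nth_minus_one: "F $$ (-1) = 1"
begin

lemma poly_fls_lowest:
  assumes "q \<noteq> 0"
  shows "(\<forall>j < - int (degree q). poly_fls q F $$ j = 0)
    \<and> poly_fls q F $$ (- int (degree q)) = lead_coeff q"
  using assms
proof (induction q)
  case (pCons a p)
  show ?case
  proof (cases "p = 0")
    case False
    then have IH: "\<forall>j < - int (degree p). poly_fls p F $$ j = 0"
        "poly_fls p F $$ (- int (degree p)) = lead_coeff p"
      using pCons.IH by auto
    have prod: "(F * poly_fls p F) $$ j = (\<Sum>i=-1..j + int (degree p). F $$ i * poly_fls p F $$ (j - i))" for j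
      using fls_mult_nth_bounds[of "-1" F "- int (degree p)" "poly_fls p F" j] nth_below IH(1) by simp
    show ?thesis
      using False IH(2) by (simp add: poly_fls_pCons prod nth_minus_one)
  qed (simp add: poly_fls_const)
qed simp

lemma poly_fls_eq_0I:
  assumes "\<And>i. i \<le> 0 \<Longrightarrow> poly_fls q F $$ i = 0"
  shows "q = 0"
  using poly_fls_lowest[of q] assms by fastforce

lemma poly_fls_range_constI:
  assumes "G \<in> poly_fls_range F" and "\<And>i. i < 0 \<Longrightarrow> G $$ i = 0"
  shows "G = fls_const (G $$ 0)"
proof -
  obtain q where G: "G = poly_fls q F"
    using assms(1) by (auto simp: poly_fls_range_def)
  have "degree q = 0"
  proof (rule ccontr)
    assume "degree q \<noteq> 0"
    then have "q \<noteq> 0" and "- int (degree q) < 0"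
      by auto
    with poly_fls_lowest[of q] assms(2) show False
      by (simp add: G)
  qed
  then have "G = fls_const (coeff q 0)"
    by (metis G degree_0_id poly_fls_const)
  then show ?thesis
    by simp
qed

lemma polynomial_part_exists_if_nth_below:
  assumes "\<forall>i < - int N. G $$ i = 0"
  shows "\<exists>q. \<forall>i\<le>0. (G - poly_fls q F) $$ i = 0"
  using assms
proof (induction N arbitrary: G)
  case 0
  then show ?case
    by (intro exI[of _ "[:G $$ 0:]"]) (auto simp: poly_fls_const)
next
  case (Suc N)
  define c where "c = G $$ (- int (Suc N))"
  have lowest: "\<forall>j < - int (Suc N). poly_fls (monom 1 (Suc N)) F $$ j = 0"
      "poly_fls (monom 1 (Suc N)) F $$ (- int (Suc N)) = 1"
    using poly_fls_lowest[of "monom 1 (Suc N)"] by (simp_all add: degree_monom_eq)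
  have monom_c: "poly_fls (monom c (Suc N)) F = fls_const c * poly_fls (monom 1 (Suc N)) F"
    by (simp add: poly_fls_monom)
  have "\<forall>i < - int N. (G - poly_fls (monom c (Suc N)) F) $$ i = 0"
  proof (intro allI impI)
    fix i assume "i < - int N"
    then consider "i = - int (Suc N)" | "i < - int (Suc N)"
      by linarith
    then show "(G - poly_fls (monom c (Suc N)) F) $$ i = 0"
    proof cases
      case 1
      then show ?thesis
        using lowest(2) by (simp only: fls_minus_nth monom_c fls_mult_const_nth) (simp add: c_def)
    next
      case 2
      then show ?thesis
        using lowest(1) Suc.prems by (simp only: fls_minus_nth monom_c fls_mult_const_nth) simp
    qed
  qed
  then obtain q where "\<forall>i\<le>0. (G - poly_fls (monom c (Suc N)) F - poly_fls q F) $$ i = 0"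
    using Suc.IH by blast
  then show ?case
    by (intro exI[of _ "q + monom c (Suc N)"]) (simp add: poly_fls_add algebra_simps)
qed

lemma polynomial_part_exists: "\<exists>q. \<forall>i\<le>0. (G - poly_fls q F) $$ i = 0"
proof -
  obtain N :: int where "\<forall>n<N. G $$ n = 0"
    by (rule fls_nth_vanishes_belowE)
  then have "\<forall>i < - int (nat (- N)). G $$ i = 0"
    by auto
  then show ?thesis
    by (rule polynomial_part_exists_if_nth_below)
qed

end

section \<open>The series \<open>\<phi>\<close> and the total derivatives of the covering\<close>

abbreviation "zz \<equiv> Var (ZC 0 False)"
abbreviation "zx \<equiv> Var (ZC 1 False)"
abbreviation "zy \<equiv> Var (ZC 0 True)"
abbreviation "zxx \<equiv> Var (ZC 2 False)"
abbreviation "zxy \<equiv> Var (ZC 1 True)"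
abbreviation "vx \<equiv> Var XC"
abbreviation "vy \<equiv> Var YC"

lemma phic_simps:
  "phic 0 = 0" "phic (Suc 0) = - vy" "phic 2 = - vx" "phic 3 = - zz - cst (1/2) * vy ^ 2"
  "phic (Suc (Suc (Suc (Suc j)))) = Var (PhiC j)"
  by (simp_all add: phic_def)

lemma phi_nth: "phi $$ i = (if i = -1 then 1 else if i < 0 then 0 else phic (nat i))"
  by (simp add: phi_def)

lemma phi_nth_PhiC: "phi $$ (int j + 4) = Var (PhiC j)"
proof -
  have "nat (int j + 4) = Suc (Suc (Suc (Suc j)))"
    by simp
  then show ?thesis
    by (simp add: phi_nth phic_simps)
qed

interpretation phi: simple_pole phi
  by standard (simp_all add: phi_nth)

lemma Pphi_eqI:
  assumes G: "\<And>i. i \<le> 0 \<Longrightarrow> G $$ i = 0" and F: "F = G + poly_fls q phi"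
  shows "Pphi F = G"
  unfolding Pphi_def
proof (rule the_equality)
  have "poly_fls q phi = (\<Sum>k\<le>degree q. fls_const (coeff q k) * phi ^ k)"
    by (simp add: poly_fls_def poly_altdef coeff_map_poly degree_map_poly)
  with G F show "(\<forall>i\<le>0. G $$ i = 0) \<and> (\<exists>c m. F = G + (\<Sum>k\<le>m. fls_const (c k) * phi ^ k))"
    by auto
next
  fix G' assume "(\<forall>i\<le>0. G' $$ i = 0) \<and> (\<exists>(c::nat \<Rightarrow> fn) m. F = G' + (\<Sum>k\<le>m. fls_const (c k) * phi ^ k))"
  then obtain c m where G': "\<forall>i\<le>0. G' $$ i = 0"
    and F': "F = G' + poly_fls (\<Sum>k\<le>m. monom (c k) k) phi"
    by (auto simp: poly_fls_sum poly_fls_monom)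
  have "poly_fls (q - (\<Sum>k\<le>m. monom (c k) k)) phi = G' - G"
    using F F' by (simp add: poly_fls_diff algebra_simps)
  then have "q = (\<Sum>k\<le>m. monom (c k) k)"
    using G G' phi.poly_fls_eq_0I[of "q - (\<Sum>k\<le>m. monom (c k) k)"] by simp
  with F F' show "G' = G"
    by simp
qed

lemma Pphi_decomposition:
  obtains q where "F = Pphi F + poly_fls q phi" and "\<And>i. i \<le> 0 \<Longrightarrow> Pphi F $$ i = 0"
proof -
  obtain q where q: "\<forall>i\<le>0. (F - poly_fls q phi) $$ i = 0"
    using phi.polynomial_part_exists by blast
  then have "Pphi F = F - poly_fls q phi"
    by (intro Pphi_eqI) auto
  with q that show thesis
    by auto
qed

definition Q_poly :: "fn poly" where "Q_poly = [:- zy, - zx, 1:]"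

lemma Qphi_poly_fls: "Qphi = poly_fls Q_poly phi"
  by (simp add: Qphi_def Q_poly_def poly_fls_pCons poly_fls_const algebra_simps power2_eq_square)

lemma Qphi_nth_below: "j < -2 \<Longrightarrow> Qphi $$ j = 0"
  using phi.poly_fls_lowest[of Q_poly] by (simp add: Q_poly_def Qphi_poly_fls)

lemma Qphi_nth_minus_two: "Qphi $$ (-2) = 1"
  using phi.poly_fls_lowest[of Q_poly] by (simp add: Q_poly_def Qphi_poly_fls)

lemma Qphi_nonzero: "Qphi \<noteq> 0"
  using Qphi_nth_minus_two by auto

lemma Qphi_nth_minus_one: "Qphi $$ (-1) = - zx"
proof -
  have "{-1..0::int} = {-1, 0}"
    by auto
  then have "(phi * phi) $$ (-1) = 0"
    using fls_mult_nth_bounds[of "-1" phi "-1" phi "-1"] phi.nth_below by (simp add: phi_nth phic_simps)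
  then show ?thesis
    by (simp add: Qphi_def power2_eq_square phi_nth)
qed

lemma Qphi_nth_zero: "Qphi $$ 0 = - 2 * vy - zy"
proof -
  have "{-1..1::int} = {-1, 0, 1}"
    by auto
  then have "(phi * phi) $$ 0 = - 2 * vy"
    using fls_mult_nth_bounds[of "-1" phi "-1" phi 0] phi.nth_below by (simp add: phi_nth phic_simps)
  then show ?thesis
    by (simp add: Qphi_def power2_eq_square phi_nth phic_simps)
qed

lemma fls_map_Qphi:
  assumes "derivation D"
  shows "fls_map D Qphi = 2 * phi * fls_map D phi - fls_const (D zx) * phi
    - fls_const zx * fls_map D phi - fls_const (D zy)"
  by (simp add: Qphi_def fls_map_simps[OF assms] algebra_simps)

lemma derivation_Dtx: "derivation (Dtx ax)"
  and derivation_Dty: "derivation (Dty ay)"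
  and derivation_Dx_eq: "derivation Dx_eq"
  and derivation_tDx: "derivation tDx"
  and derivation_tDy: "derivation tDy"
  and derivation_Sfield: "derivation (Sfield n)"
  by (simp_all add: Dtx_def Dty_def Dx_eq_def tDx_def tDy_def Sfield_def derivation_vf)

lemma Dtx_Var [simp]:
  "Dtx ax vx = 1" "Dtx ax vy = 0" "Dtx ax (Var (ZC a b)) = Var (ZC (Suc a) b)"
  "Dtx ax (Var (PhiC j)) = ax j"
  by (simp_all add: Dtx_def)

lemma Dty_Var [simp]:
  "Dty ay vx = 0" "Dty ay vy = 1" "Dty ay (Var (ZC a False)) = Var (ZC a True)"
  "Dty ay (Var (ZC a True)) = (Dx_eq ^^ a) zyy"
  "Dty ay (Var (PhiC j)) = ay j"
  by (simp_all add: Dty_def)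

lemma Dx_eq_Var [simp]:
  "Dx_eq vx = 1" "Dx_eq vy = 0" "Dx_eq (Var (ZC a b)) = Var (ZC (Suc a) b)"
  "Dx_eq (Var (PhiC j)) = 0"
  by (simp_all add: Dx_eq_def)

lemma tDx_Var [simp]:
  "tDx vx = 1" "tDx vy = 0" "tDx (Var (ZC a b)) = Var (ZC (Suc a) b)"
  "tDx (Var (PhiC j)) = phix j"
  by (simp_all add: tDx_def)

lemma tDy_Var [simp]:
  "tDy vx = 0" "tDy vy = 1" "tDy (Var (ZC a False)) = Var (ZC a True)"
  "tDy (Var (PhiC j)) = phiy j"
  by (simp_all add: tDy_def)

lemma Sfield_Var [simp]:
  "Sfield n vx = 0" "Sfield n vy = 0"
  "Sfield n (Var (ZC a b)) = (tDx ^^ a) ((tDy ^^ (if b then 1 else 0)) (Zgen n))"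
  "Sfield n (Var (PhiC j)) = PhiS n j"
  by (simp_all add: Sfield_def)

lemma fls_map_phi: "derivation D \<Longrightarrow> fls_map D phi = dser D"
  by (rule fls_eqI)
    (auto simp: phi_nth dser_def derivation_zero derivation_one phic_simps)

lemma dser_nth: "dser D $$ i = (if i \<le> 0 then 0 else D (phic (nat i)))"
  by (simp add: dser_def)

lemma dser_nth_PhiC: "dser D $$ (int j + 4) = D (Var (PhiC j))"
  using phi_nth_PhiC[of j] by (simp add: dser_def phi_nth)

lemma int_cases_le_3:
  fixes i :: int
  obtains "i \<le> 3" | j where "i = int j + 4"
proof (cases "i \<le> 3")
  case False
  then have "i = int (nat (i - 4)) + 4"
    by simp
  then show thesis
    by (rule that(2))
qed (rule that(1))

lemma dser_eq_iff:
  "dser D = A \<longleftrightarrow> (\<forall>i\<le>3. dser D $$ i = A $$ i) \<and> (\<forall>j. D (Var (PhiC j)) = A $$ (int j + 4))"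
proof
  assume "dser D = A"
  then show "(\<forall>i\<le>3. dser D $$ i = A $$ i) \<and> (\<forall>j. D (Var (PhiC j)) = A $$ (int j + 4))"
    using dser_nth_PhiC[of D] by auto
next
  assume A: "(\<forall>i\<le>3. dser D $$ i = A $$ i) \<and> (\<forall>j. D (Var (PhiC j)) = A $$ (int j + 4))"
  show "dser D = A"
  proof (rule fls_eqI)
    fix i
    show "dser D $$ i = A $$ i"
      by (cases i rule: int_cases_le_3) (use A dser_nth_PhiC[of D] in auto)
  qed
qed

lemma dser_Dtx_nth_low:
  assumes "i \<le> 3"
  shows "dser (Dtx ax) $$ i = (if i = 2 then -1 else if i = 3 then - zx else 0)"
proof -
  from assms consider "i \<le> 0" | "i = 1" | "i = 2" | "i = 3"
    by linarith
  then show ?thesis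
    by cases (auto simp: dser_nth phic_simps derivation_simps[OF derivation_Dtx]
        derivation_cst[OF derivation_Dtx])
qed

lemma cst_half: "cst (1/2) * (2 * p) = p"
proof -
  have "cst (1/2) * 2 = Poly_Mapping.single 0 (1/2) * Poly_Mapping.single 0 (2::rat)"
    by (simp add: cst_def)
  also have "\<dots> = 1"
    by (simp only: mult_single) simp
  finally show ?thesis
    by (simp add: mult.assoc[symmetric])
qed

lemma dser_Dty_nth_low:
  assumes "i \<le> 3"
  shows "dser (Dty ay) $$ i = (if i = 1 then -1 else if i = 3 then - zy - vy else 0)"
proof -
  from assms consider "i \<le> 0" | "i = 1" | "i = 2" | "i = 3"
    by linarith
  then show ?thesis
    by cases (auto simp: dser_nth phic_simps derivation_simps[OF derivation_Dty]
        derivation_cst[OF derivation_Dty] cst_half)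
qed

definition Px :: "fn fls" where "Px = fls_map tDx phi"
definition Py :: "fn fls" where "Py = fls_map tDy phi"

lemma Px_dser: "Px = dser (Dtx phix)" and Py_dser: "Py = dser (Dty phiy)"
  by (simp_all add: Px_def Py_def tDx_def tDy_def fls_map_phi derivation_Dtx derivation_Dty)

lemma Px_nth_low: "i \<le> 3 \<Longrightarrow> Px $$ i = (if i = 2 then -1 else if i = 3 then - zx else 0)"
  and Px_nth_PhiC: "Px $$ (int j + 4) = phix j"
  and Py_nth_low: "i \<le> 3 \<Longrightarrow> Py $$ i = (if i = 1 then -1 else if i = 3 then - zy - vy else 0)"
  and Py_nth_PhiC: "Py $$ (int j + 4) = phiy j"
  by (simp_all add: Px_dser Py_dser dser_Dtx_nth_low dser_Dty_nth_low dser_nth_PhiC)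

lemma Px_eqI:
  assumes A: "Qphi * A = -1"
    and A_low: "\<And>i. i \<le> 3 \<Longrightarrow> A $$ i = (if i = 2 then -1 else if i = 3 then - zx else 0)"
  shows "Px = A"
proof -
  have iff: "Qphi * dser (Dtx ax) = -1 \<longleftrightarrow> ax = (\<lambda>j. A $$ (int j + 4))" for ax
  proof -
    have "Qphi * dser (Dtx ax) = -1 \<longleftrightarrow> Qphi * dser (Dtx ax) = Qphi * A"
      by (simp only: A)
    also have "\<dots> \<longleftrightarrow> dser (Dtx ax) = A"
      using Qphi_nonzero by simp
    also have "\<dots> \<longleftrightarrow> ax = (\<lambda>j. A $$ (int j + 4))"
      by (simp add: dser_eq_iff dser_Dtx_nth_low A_low fun_eq_iff)
    finally show ?thesis .
  qed
  then have "phix = (\<lambda>j. A $$ (int j + 4))"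
    unfolding phix_def by blast
  with iff[of "phix"] have "Qphi * Px = Qphi * A"
    by (simp add: Px_dser A)
  with Qphi_nonzero show ?thesis
    by simp
qed

lemma Py_eqI:
  assumes B: "Qphi * B = - (phi - fls_const zx)"
    and B_low: "\<And>i. i \<le> 3 \<Longrightarrow> B $$ i = (if i = 1 then -1 else if i = 3 then - zy - vy else 0)"
  shows "Py = B"
proof -
  have iff: "Qphi * dser (Dty ay) = - (phi - fls_const zx) \<longleftrightarrow> ay = (\<lambda>j. B $$ (int j + 4))" for ay
  proof -
    have "Qphi * dser (Dty ay) = - (phi - fls_const zx) \<longleftrightarrow> Qphi * dser (Dty ay) = Qphi * B"
      by (simp only: B)
    also have "\<dots> \<longleftrightarrow> dser (Dty ay) = B"
      using Qphi_nonzero by simp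
    also have "\<dots> \<longleftrightarrow> ay = (\<lambda>j. B $$ (int j + 4))"
      by (simp add: dser_eq_iff dser_Dty_nth_low B_low fun_eq_iff)
    finally show ?thesis .
  qed
  then have "phiy = (\<lambda>j. B $$ (int j + 4))"
    unfolding phiy_def by blast
  with iff[of "phiy"] have "Qphi * Py = Qphi * B"
    by (simp add: Py_dser B)
  with Qphi_nonzero show ?thesis
    by simp
qed

lemma Qphi_subdegree: "fls_subdegree Qphi = -2"
  by (rule fls_subdegree_eqI) (simp_all add: Qphi_nth_minus_two Qphi_nth_below)

lemma Qphi_inverse_exists:
  obtains A where "Qphi * A = -1" and "\<forall>i<2. A $$ i = 0"
    and "A $$ 2 = -1" and "A $$ 3 = - zx" and "A $$ 4 = - zx * zx - 2 * vy - zy"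
proof -
  define A where "A = - fls_right_inverse Qphi 1"
  have QA: "Qphi * A = -1"
    using fls_right_inverse[of Qphi 1] by (simp add: A_def Qphi_subdegree Qphi_nth_minus_two)
  have "fls_subdegree (Qphi * A) = 0" and "A \<noteq> 0"
    using QA by auto
  then have "fls_subdegree A = 2"
    using Qphi_nonzero Qphi_subdegree by simp
  then have A_below: "\<forall>i<2. A $$ i = 0"
    by auto
  have QA_nth: "(Qphi * A) $$ n = (\<Sum>i=-2..n-2. Qphi $$ i * A $$ (n - i))" for n
    using fls_mult_nth_bounds[of "-2" Qphi 2 A n] Qphi_nth_below A_below by simp
  have A2: "A $$ 2 = -1"
    using QA_nth[of 0] by (simp add: QA Qphi_nth_minus_two)
  have A3: "A $$ 3 = - zx"
  proof -
    have "{-2..-1::int} = {-2, -1}"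
      by auto
    then have "A $$ 3 + zx = 0"
      using QA_nth[of 1] by (simp add: QA Qphi_nth_minus_two Qphi_nth_minus_one A2)
    then show ?thesis
      by (simp add: eq_neg_iff_add_eq_0)
  qed
  have "A $$ 4 = - zx * zx - 2 * vy - zy"
  proof -
    have "{-2..0::int} = {-2, -1, 0}"
      by auto
    moreover have "(\<Sum>i=-2..0. Qphi $$ i * A $$ (2 - i)) = 0"
      using QA_nth[of 2] by (simp add: QA)
    ultimately have "A $$ 4 - (- zx * zx - 2 * vy - zy) = 0"
      by (simp add: Qphi_nth_minus_two Qphi_nth_minus_one Qphi_nth_zero A2 A3 algebra_simps)
    then show ?thesis
      by simp
  qed
  with QA A_below A2 A3 that show thesis
    by blast
qed

lemma Qphi_Px: "Qphi * Px = -1"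
  and Py_eq: "Py = (phi - fls_const zx) * Px"
proof -
  obtain A where QA: "Qphi * A = -1" and A_below: "\<forall>i<2. A $$ i = 0"
    and A2: "A $$ 2 = -1" and A3: "A $$ 3 = - zx" and A4: "A $$ 4 = - zx * zx - 2 * vy - zy"
    by (rule Qphi_inverse_exists)
  have Px: "Px = A"
    using QA by (rule Px_eqI) (use A_below A2 A3 in auto)
  show "Qphi * Px = -1"
    unfolding Px by (fact QA)
  define B where "B = (phi - fls_const zx) * A"
  have QB: "Qphi * B = - (phi - fls_const zx)"
    by (simp add: B_def QA mult.left_commute[of Qphi])
  have B_nth: "B $$ n = (\<Sum>i=-1..n-2. (phi - fls_const zx) $$ i * A $$ (n - i))" for n
    unfolding B_def by (rule fls_mult_nth_bounds) (auto simp: phi_nth A_below)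
  have "B $$ i = (if i = 1 then -1 else if i = 3 then - zy - vy else 0)" if "i \<le> 3" for i
  proof -
    from that consider "i \<le> 0" | "i = 1" | "i = 2" | "i = 3"
      by linarith
    then show ?thesis
    proof cases
      case 3
      have "{-1..0::int} = {-1, 0}"
        by auto
      with 3 show ?thesis
        by (simp add: B_nth A2 A3 phi_nth phic_simps)
    next
      case 4
      have "{-1..1::int} = {-1, 0, 1}"
        by auto
      with 4 show ?thesis
        by (simp add: B_nth A2 A3 A4 phi_nth phic_simps algebra_simps)
    qed (simp_all add: B_nth A2 phi.nth_minus_one)
  qed
  with QB have "Py = B"
    by (rule Py_eqI)
  then show "Py = (phi - fls_const zx) * Px"
    unfolding Px B_def .
qed

lemma Qphi_Py: "Qphi * Py = - (phi - fls_const zx)"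
  by (simp add: Py_eq mult.left_commute[of Qphi] Qphi_Px)

lemma derivation_Qphi_Px:
  assumes "derivation \<Delta>"
  shows "\<Delta> Qphi * Px + Qphi * \<Delta> Px = 0"
  using arg_cong[OF Qphi_Px, of \<Delta>]
  by (simp add: derivation_mult[OF assms] derivation_uminus[OF assms] derivation_one[OF assms])

lemma derivation_Qphi_Py:
  assumes "derivation \<Delta>"
  shows "\<Delta> Qphi * Py + Qphi * \<Delta> Py = - (\<Delta> phi - \<Delta> (fls_const zx))"
  using arg_cong[OF Qphi_Py, of \<Delta>]
  by (simp add: derivation_mult[OF assms] derivation_uminus[OF assms] derivation_diff[OF assms])

lemma tD_zx_zy: "tDx zx = zxx" "tDx zy = zxy" "tDy zx = zxy" "tDy zy = zyy"
  by (simp_all add: numeral_2_eq_2 tDy_def)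

lemma fls_const_zyy: "fls_const zyy = fls_const zy * fls_const zxx - fls_const zx * fls_const zxy - 1"
  by (simp only: zyy_def fls_const_mult_const fls_const_1[symmetric] fls_minus_const)

lemma fls_map_tDx_Qphi:
  "fls_map tDx Qphi = 2 * phi * Px - fls_const zxx * phi - fls_const zx * Px - fls_const zxy"
  by (simp only: fls_map_Qphi[OF derivation_tDx] tD_zx_zy flip: Px_def)

lemma fls_map_tDy_Qphi:
  "fls_map tDy Qphi = 2 * phi * Py - fls_const zxy * phi - fls_const zx * Py - fls_const zyy"
  by (simp only: fls_map_Qphi[OF derivation_tDy] tD_zx_zy flip: Py_def)

lemma fls_map_tDx_Py: "fls_map tDx Py = fls_map tDy Px"
proof -
  have x: "fls_map tDx Qphi * Py + Qphi * fls_map tDx Py = - (Px - fls_const zxx)"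
    using derivation_Qphi_Py[OF derivation_fls_map[OF derivation_tDx]]
    by (simp only: fls_map_const[of tDx, OF derivation_zero[OF derivation_tDx]] tD_zx_zy flip: Px_def)
  have y: "fls_map tDy Qphi * Px + Qphi * fls_map tDy Px = 0"
    by (rule derivation_Qphi_Px[OF derivation_fls_map[OF derivation_tDy]])
  have "Qphi * fls_map tDx Py = Qphi * fls_map tDy Px"
    using x y fls_map_tDx_Qphi fls_map_tDy_Qphi Qphi_def Qphi_Px Py_eq fls_const_zyy by algebra
  then show ?thesis
    using Qphi_nonzero by simp
qed

definition is_local :: "fn \<Rightarrow> bool" where
  "is_local p \<longleftrightarrow> (\<forall>j. PhiC j \<notin> vars p)"

lemma is_local_zyy: "is_local zyy"
  using vars_diff[of "zy * zxx - zx * zxy" 1] vars_diff[of "zy * zxx" "zx * zxy"]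
    vars_mult[of zy zxx] vars_mult[of zx zxy]
  unfolding is_local_def zyy_def by auto

lemma is_local_Dx_eq:
  assumes "is_local p"
  shows "is_local (Dx_eq p)"
proof -
  let ?g = "\<lambda>v. case v of XC \<Rightarrow> 1 | YC \<Rightarrow> 0 | ZC a b \<Rightarrow> Var (ZC (Suc a) b) | PhiC j \<Rightarrow> (0::fn)"
  have "PhiC j \<notin> vars (?g v)" for j v
    by (cases v) auto
  with vars_vf[of ?g p] assms show ?thesis
    unfolding is_local_def Dx_eq_def by blast
qed

lemma tDx_eq_Dx_eq:
  assumes "is_local p"
  shows "tDx p = Dx_eq p"
proof (rule derivation_eqI[OF derivation_tDx derivation_Dx_eq])
  fix v assume "v \<in> vars p"
  with assms show "tDx (Var v) = Dx_eq (Var v)"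
    by (cases v) (simp_all add: is_local_def)
qed

lemma is_local_Dx_eq_power: "is_local ((Dx_eq ^^ a) zyy)"
  by (induction a) (simp_all add: is_local_zyy is_local_Dx_eq)

lemma Dx_eq_power_zyy: "(Dx_eq ^^ a) zyy = (tDx ^^ a) zyy"
proof (induction a)
  case (Suc a)
  have "(Dx_eq ^^ Suc a) zyy = tDx ((Dx_eq ^^ a) zyy)"
    by (simp add: tDx_eq_Dx_eq is_local_Dx_eq_power)
  with Suc.IH show ?case
    by (metis comp_apply funpow.simps(2))
qed simp

lemma tDy_Var_ZC_True [simp]: "tDy (Var (ZC a True)) = (tDx ^^ a) zyy"
  by (simp add: tDy_def Dx_eq_power_zyy)

lemma tDx_tDy_commute: "tDx (tDy p) = tDy (tDx p)"
proof -
  have "derivation (\<lambda>p. tDx (tDy p) - tDy (tDx p))"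
    by (rule derivation_commutator[OF derivation_tDx derivation_tDy])
  moreover have "tDx (tDy (Var v)) - tDy (tDx (Var v)) = 0" for v
  proof (cases v)
    case (PhiC j)
    have "fls_map tDx Py $$ (int j + 4) = fls_map tDy Px $$ (int j + 4)"
      by (simp only: fls_map_tDx_Py)
    with PhiC show ?thesis
      by (simp add: derivation_tDx derivation_tDy Px_nth_PhiC Py_nth_PhiC)
  next
    case (ZC a b)
    then show ?thesis
      by (cases b) simp_all
  qed (simp_all add: derivation_zero[OF derivation_tDx] derivation_zero[OF derivation_tDy]
      derivation_one[OF derivation_tDx] derivation_one[OF derivation_tDy])
  ultimately show ?thesis
    using derivation_eq_0I by fastforce
qed

lemma tDy_tDx_power: "tDy ((tDx ^^ a) p) = (tDx ^^ a) (tDy p)"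
  by (induction a) (simp_all add: tDx_tDy_commute[symmetric])

section \<open>The symmetry\<close>

definition f_series :: "int \<Rightarrow> fn fls" where
  "f_series n = Pphi (fls_X_intpow n * fls_deriv phi)"

lemma fco_eq_f_series_nth: "fco n i = f_series n $$ int i"
  by (simp add: fco_def f_series_def)

lemma f_series_decomposition:
  obtains q where "fls_X_intpow n * fls_deriv phi = f_series n + poly_fls q phi"
    and "\<And>i. i \<le> 0 \<Longrightarrow> f_series n $$ i = 0"
  using Pphi_decomposition[of "fls_X_intpow n * fls_deriv phi"] unfolding f_series_def by blast

lemma Sfield_phi_nth_low:
  assumes "i \<le> 3"
  shows "Sfield n (phi $$ i) = (if i = 3 then - Zgen n else 0)"
proof -
  have S: "derivation (Sfield n)"
    by (rule derivation_Sfield)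
  from assms consider "i < -1" | "i = -1" | "i = 0" | "i = 1" | "i = 2" | "i = 3"
    by linarith
  then show ?thesis
    by cases (simp_all add: phi_nth phic_simps derivation_simps[OF S] derivation_cst[OF S])
qed

lemma Sfield_phi:
  "fls_map (Sfield n) phi = f_series n + fls_const (fco n 2) * Px + fls_const (fco n 1) * Py"
proof (rule fls_eqI)
  fix i
  obtain f_nonpos: "\<And>i. i \<le> 0 \<Longrightarrow> f_series n $$ i = 0"
    using f_series_decomposition by blast
  show "fls_map (Sfield n) phi $$ i =
      (f_series n + fls_const (fco n 2) * Px + fls_const (fco n 1) * Py) $$ i"
  proof (cases i rule: int_cases_le_3)
    case 1
    then have "fls_map (Sfield n) phi $$ i = (if i = 3 then - Zgen n else 0)"
      by (simp add: derivation_Sfield Sfield_phi_nth_low)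
    moreover from 1 consider "i \<le> 0" | "i = 1" | "i = 2" | "i = 3"
      by linarith
    then have "(f_series n + fls_const (fco n 2) * Px + fls_const (fco n 1) * Py) $$ i
        = (if i = 3 then - Zgen n else 0)"
      by cases (simp_all add: Px_nth_low Py_nth_low f_nonpos fco_eq_f_series_nth Zgen_def
          algebra_simps)
    ultimately show ?thesis
      by simp
  next
    case (2 j)
    have "fco n (j + 4) = f_series n $$ i"
      by (simp add: fco_eq_f_series_nth 2)
    then show ?thesis
      by (simp add: derivation_Sfield 2 phi_nth_PhiC Px_nth_PhiC Py_nth_PhiC PhiS_def)
  qed
qed

definition Cx :: "int \<Rightarrow> fn \<Rightarrow> fn" where "Cx n p = Sfield n (tDx p) - tDx (Sfield n p)"
definition Cy :: "int \<Rightarrow> fn \<Rightarrow> fn" where "Cy n p = Sfield n (tDy p) - tDy (Sfield n p)"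

definition Wx :: "int \<Rightarrow> fn fls" where "Wx n = fls_map (Cx n) phi"
definition Wy :: "int \<Rightarrow> fn fls" where "Wy n = fls_map (Cy n) phi"

lemma derivation_Cx: "derivation (Cx n)"
  unfolding Cx_def[abs_def] by (rule derivation_commutator[OF derivation_Sfield derivation_tDx])

lemma derivation_Cy: "derivation (Cy n)"
  unfolding Cy_def[abs_def] by (rule derivation_commutator[OF derivation_Sfield derivation_tDy])

lemma Cx_Var: "Cx n vx = 0" "Cx n vy = 0" "Cx n (Var (ZC a b)) = 0"
  by (simp_all add: Cx_def derivation_zero[OF derivation_Sfield] derivation_one[OF derivation_Sfield]
      derivation_zero[OF derivation_tDx])

lemma Cy_Var: "Cy n vx = 0" "Cy n vy = 0" "Cy n (Var (ZC a False)) = 0"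
  by (simp_all add: Cy_def derivation_zero[OF derivation_Sfield] derivation_one[OF derivation_Sfield]
      derivation_zero[OF derivation_tDy] tDy_tDx_power)

lemma derivation_phi_nth_low:
  assumes "derivation D" and "D vx = 0" "D vy = 0" "D zz = 0" and "i \<le> 3"
  shows "D (phi $$ i) = 0"
proof -
  from assms(5) consider "i < -1" | "i = -1" | "i = 0" | "i = 1" | "i = 2" | "i = 3"
    by linarith
  then show ?thesis
    by cases (simp_all add: assms(2-4) phi_nth phic_simps derivation_simps[OF assms(1)]
        derivation_cst[OF assms(1)])
qed

lemma Wx_nth_low: "i \<le> 3 \<Longrightarrow> Wx n $$ i = 0"
  by (simp add: Wx_def derivation_Cx derivation_phi_nth_low Cx_Var)

lemma Wy_nth_low: "i \<le> 3 \<Longrightarrow> Wy n $$ i = 0"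
  by (simp add: Wy_def derivation_Cy derivation_phi_nth_low Cy_Var)

lemma Wx_eq: "Wx n = fls_map (Sfield n) Px - fls_map tDx (fls_map (Sfield n) phi)"
  unfolding Wx_def Cx_def[abs_def] Px_def
  by (rule fls_map_commutator) (simp_all add: derivation_zero derivation_Sfield derivation_tDx)

lemma Wy_eq: "Wy n = fls_map (Sfield n) Py - fls_map tDy (fls_map (Sfield n) phi)"
  unfolding Wy_def Cy_def[abs_def] Py_def
  by (rule fls_map_commutator) (simp_all add: derivation_zero derivation_Sfield derivation_tDy)

lemma Qphi_in_poly_fls_range: "Qphi \<in> poly_fls_range phi"
  by (simp add: Qphi_poly_fls poly_fls_range_intros)

lemma Qphi_sq_const:
  assumes "Qphi * Qphi * W \<in> poly_fls_range phi" and "\<And>i. i \<le> 3 \<Longrightarrow> W $$ i = 0"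
  shows "Qphi * Qphi * W = fls_const ((Qphi * Qphi * W) $$ 0)"
proof (rule phi.poly_fls_range_constI[OF assms(1)])
  fix i :: int
  assume "i < 0"
  have "(Qphi * Qphi) $$ j = 0" if "j < -4" for j
    using that fls_mult_nth_bounds[of "-2" Qphi "-2" Qphi j] Qphi_nth_below by simp
  then have "(Qphi * Qphi * W) $$ i = (\<Sum>k=-4..i-4. (Qphi * Qphi) $$ k * W $$ (i - k))"
    by (intro fls_mult_nth_bounds) (auto simp: assms(2))
  with \<open>i < 0\<close> show "(Qphi * Qphi * W) $$ i = 0"
    by simp
qed

lemma Sfield_phi_decomposition:
  obtains q where "fls_map (Sfield n) phi = fls_X_intpow n * fls_deriv phi - poly_fls q phi
    + fls_const (fco n 2) * Px + fls_const (fco n 1) * Py"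
proof -
  obtain q where "fls_X_intpow n * fls_deriv phi = f_series n + poly_fls q phi"
    using f_series_decomposition by blast
  with that show thesis
    by (simp add: Sfield_phi)
qed

lemma fls_map_Sfield_phi_form:
  assumes D: "derivation D"
  shows "fls_map D (fls_X_intpow n * fls_deriv phi - poly_fls q phi + fls_const c\<^sub>2 * Px + fls_const c\<^sub>1 * Py)
    = fls_X_intpow n * fls_deriv (fls_map D phi)
      - (poly_fls (map_poly D q) phi + poly_fls (pderiv q) phi * fls_map D phi)
      + fls_const (D c\<^sub>2) * Px + fls_const c\<^sub>2 * fls_map D Px
      + fls_const (D c\<^sub>1) * Py + fls_const c\<^sub>1 * fls_map D Py"
  by (simp only: fls_map_simps[OF D] fls_map_X_intpow[OF D] fls_map_deriv[OF D] fls_map_poly_fls[OF D]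
      mult_zero_left add_0 add.assoc)

lemma Qphi_sq_Wx_in_range: "Qphi * Qphi * Wx n \<in> poly_fls_range phi"
proof -
  let ?f\<^sub>1 = "fco n 1" and ?f\<^sub>2 = "fco n 2" and ?S = "fls_map (Sfield n)"
  obtain q where Psi: "?S phi = fls_X_intpow n * fls_deriv phi - poly_fls q phi
      + fls_const ?f\<^sub>2 * Px + fls_const ?f\<^sub>1 * Py"
    by (rule Sfield_phi_decomposition)
  have DxPsi: "fls_map tDx (?S phi) = fls_X_intpow n * fls_deriv Px
      - (poly_fls (map_poly tDx q) phi + poly_fls (pderiv q) phi * Px)
      + fls_const (tDx ?f\<^sub>2) * Px + fls_const ?f\<^sub>2 * fls_map tDx Px
      + fls_const (tDx ?f\<^sub>1) * Py + fls_const ?f\<^sub>1 * fls_map tDy Px"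
    unfolding Psi fls_map_Sfield_phi_form[OF derivation_tDx] by (simp only: fls_map_tDx_Py flip: Px_def)
  have dP: "(2 * phi * fls_deriv phi - fls_const zx * fls_deriv phi) * Px + Qphi * fls_deriv Px = 0"
    using derivation_Qphi_Px[OF derivation_fls_deriv] by (simp add: Qphi_def power2_eq_square algebra_simps)
  have "Qphi * Qphi * Wx n =
      - ((2 * phi - fls_const zx) * poly_fls q phi)
      - (fls_const (Sfield n zy) + phi * fls_const (Sfield n zx))
      + Qphi * Qphi * poly_fls (map_poly tDx q) phi - Qphi * poly_fls (pderiv q) phi
      + fls_const (tDx ?f\<^sub>2) * Qphi + fls_const (tDx ?f\<^sub>1) * Qphi * (phi - fls_const zx)
      + (fls_const ?f\<^sub>2 * fls_const zxy + fls_const ?f\<^sub>1 * fls_const zyy)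
      + phi * (fls_const ?f\<^sub>2 * fls_const zxx + fls_const ?f\<^sub>1 * fls_const zxy)"
    using Wx_eq[of n] Psi DxPsi dP fls_map_Qphi[OF derivation_Sfield, of n]
      derivation_Qphi_Px[OF derivation_fls_map[OF derivation_Sfield[of n]]]
      derivation_Qphi_Px[OF derivation_fls_map[OF derivation_tDx]]
      derivation_Qphi_Px[OF derivation_fls_map[OF derivation_tDy]]
      fls_map_tDx_Qphi fls_map_tDy_Qphi Qphi_def Qphi_Px Py_eq
    by algebra
  then show ?thesis
    by (simp only:) (intro poly_fls_range_intros Qphi_in_poly_fls_range)
qed

lemma Qphi_sq_Wy_in_range: "Qphi * Qphi * Wy n \<in> poly_fls_range phi"
proof -
  let ?f\<^sub>1 = "fco n 1" and ?f\<^sub>2 = "fco n 2" and ?S = "fls_map (Sfield n)"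
  obtain q where Psi: "?S phi = fls_X_intpow n * fls_deriv phi - poly_fls q phi
      + fls_const ?f\<^sub>2 * Px + fls_const ?f\<^sub>1 * Py"
    by (rule Sfield_phi_decomposition)
  have DyPsi: "fls_map tDy (?S phi) = fls_X_intpow n * fls_deriv Py
      - (poly_fls (map_poly tDy q) phi + poly_fls (pderiv q) phi * Py)
      + fls_const (tDy ?f\<^sub>2) * Px + fls_const ?f\<^sub>2 * fls_map tDy Px
      + fls_const (tDy ?f\<^sub>1) * Py + fls_const ?f\<^sub>1 * fls_map tDy Py"
    unfolding Psi fls_map_Sfield_phi_form[OF derivation_tDy] by (simp only: flip: Py_def)
  have SR: "?S Qphi * Py + Qphi * ?S Py = - (?S phi - fls_const (Sfield n zx))"
    using derivation_Qphi_Py[OF derivation_fls_map[OF derivation_Sfield]]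
    by (simp only: fls_map_const[of "Sfield n", OF derivation_zero[OF derivation_Sfield]])
  have dR: "(2 * phi * fls_deriv phi - fls_const zx * fls_deriv phi) * Py + Qphi * fls_deriv Py
      = - fls_deriv phi"
    using derivation_Qphi_Py[OF derivation_fls_deriv] by (simp add: Qphi_def power2_eq_square algebra_simps)
  have DyR: "fls_map tDy Qphi * Py + Qphi * fls_map tDy Py = - (Py - fls_const zxy)"
    using derivation_Qphi_Py[OF derivation_fls_map[OF derivation_tDy]]
    by (simp only: fls_map_const[of tDy, OF derivation_zero[OF derivation_tDy]] tD_zx_zy flip: Py_def)
  have "Qphi * Qphi * Wy n =
      Qphi * poly_fls q phi - (2 * phi - fls_const zx) * (phi - fls_const zx) * poly_fls q phi
      + Qphi * fls_const (Sfield n zx)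
      - (fls_const (Sfield n zx) * phi + fls_const (Sfield n zy)) * (phi - fls_const zx)
      + Qphi * Qphi * poly_fls (map_poly tDy q) phi - poly_fls (pderiv q) phi * Qphi * (phi - fls_const zx)
      + fls_const (tDy ?f\<^sub>2) * Qphi + fls_const (tDy ?f\<^sub>1) * Qphi * (phi - fls_const zx)
      + fls_const ?f\<^sub>2 + fls_const ?f\<^sub>2 * (fls_const zxy * phi + fls_const zyy)
      - fls_const ?f\<^sub>1 * Qphi * fls_const zxy
      + fls_const ?f\<^sub>1 * (phi - fls_const zx) * (fls_const zxy * phi + fls_const zyy)"
    using Wy_eq[of n] Psi DyPsi SR dR DyR fls_map_Qphi[OF derivation_Sfield, of n]
      derivation_Qphi_Px[OF derivation_fls_map[OF derivation_tDy]]
      fls_map_tDy_Qphi Qphi_def Qphi_Px Py_eq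
    by algebra
  then show ?thesis
    by (simp only:) (intro poly_fls_range_intros Qphi_in_poly_fls_range)
qed

definition J_poly :: "fn \<Rightarrow> fn \<Rightarrow> fn \<Rightarrow> fn poly" where
  "J_poly mx my G =
    [: zy * mx - zx * zx * mx + 2 * zy * zyy * mx + G * zy * zy - zx * my - 2 * zy * zxy * my,
       4 * zx * mx + 2 * zx * zyy * mx + 2 * zy * zxy * mx + 2 * G * zx * zy + 2 * my
         - 2 * zx * zxy * my - 2 * zy * zxx * my,
       -3 * mx - 2 * zyy * mx + 2 * zx * zxy * mx - 2 * G * zy + G * zx * zx + 2 * zxy * my
         - 2 * zx * zxx * my,
       -2 * zxy * mx - 2 * G * zx + 2 * zxx * my,
       G :]"

lemma zxx_nonzero: "zxx \<noteq> 0"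
proof
  assume "zxx = 0"
  then have "pd (ZC 2 False) zxx = 0"
    by simp
  then show False
    by (simp add: pd_Var)
qed

lemma J_poly_eq_0D:
  assumes "J_poly mx my G = 0"
  shows "mx = 0" and "my = 0" and "G = 0"
proof -
  have G: "G = 0"
    and c3: "-2 * zxy * mx - 2 * G * zx + 2 * zxx * my = 0"
    and c2: "-3 * mx - 2 * zyy * mx + 2 * zx * zxy * mx - 2 * G * zy + G * zx * zx + 2 * zxy * my
      - 2 * zx * zxx * my = 0"
    using assms unfolding J_poly_def pCons_eq_0_iff by blast+
  define K where "K = - zxx - 2 * zy * zxx * zxx + 2 * zx * zxx * zxy + 2 * zxy * zxy"
  have "K \<noteq> 0"
  proof
    assume "K = 0"
    then have "pd (ZC 0 True) (pd (ZC 2 False) (pd (ZC 2 False) K)) = 0"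
      by (simp add: derivation_zero[OF derivation_pd])
    moreover have "pd (ZC 0 True) (pd (ZC 2 False) (pd (ZC 2 False) K)) = -4"
      by (simp add: K_def derivation_simps[OF derivation_pd] pd_Var algebra_simps)
    ultimately show False
      by simp
  qed
  from c3 G have "2 * (zxx * my - zxy * mx) = 0"
    by (simp add: algebra_simps)
  then have c3': "zxx * my = zxy * mx"
    by simp
  \<comment> \<open>multiply the \<open>\<phi>\<^sup>2\<close>-coefficient by \<open>zxx\<close> and use \<open>c3'\<close> to eliminate \<open>my\<close>\<close>
  have "mx * K = 0"
    using c2 c3' G unfolding K_def zyy_def by algebra
  with \<open>K \<noteq> 0\<close> show "mx = 0"
    by simp
  with c3' zxx_nonzero show "my = 0"
    by simp
  show "G = 0"
    by (fact G)
qed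

lemma Jacobi_ring_identity:
  fixes Q P R ph a b c d e Wx Wy mx my E Dmx Dmy CxR CyP DyW DxW :: "'a::{idom,semiring_char_0}"
  assumes "Q = ph\<^sup>2 - a * ph - b" and "Q * P = -1" and "R = (ph - a) * P"
    and "Q * Q * Wx = mx" and "Q * Q * Wy = my"
    and "(2 * ph * Wx - a * Wx) * R + Q * CxR = - Wx"
    and "(2 * ph * Wy - a * Wy - E) * P + Q * CyP = 0"
    and "(2 * ph * R - d * ph - a * R - e) * Q * Wx + Q * (2 * ph * R - d * ph - a * R - e) * Wx
      + Q * Q * DyW = Dmx"
    and "(2 * ph * P - c * ph - a * P - d) * Q * Wy + Q * (2 * ph * P - c * ph - a * P - d) * Wy
      + Q * Q * DxW = Dmy"
    and "CxR - DyW = CyP - DxW"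
  shows "- Q * mx - (2 * ph - a) * (ph - a) * mx - 2 * mx * Q * (d * ph + e)
    + Q * Q * (E + Dmy - Dmx) + (2 * ph - a) * my + 2 * my * Q * (c * ph + d) = 0"
  using assms by algebra

lemma Cx_Cy_Jacobi: "Cx n (tDy p) - tDy (Cx n p) = Cy n (tDx p) - tDx (Cy n p)"
  by (simp add: Cx_def Cy_def derivation_diff[OF derivation_tDx] derivation_diff[OF derivation_tDy]
      tDx_tDy_commute algebra_simps)

lemma Wx_Wy_Jacobi: "fls_map (Cx n) Py - fls_map tDy (Wx n) = fls_map (Cy n) Px - fls_map tDx (Wy n)"
proof -
  have "fls_map (Cx n) Py - fls_map tDy (Wx n) = fls_map (\<lambda>p. Cx n (tDy p) - tDy (Cx n p)) phi"
    unfolding Py_def Wx_def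
    by (rule fls_map_commutator[symmetric]) (simp_all add: derivation_zero derivation_Cx derivation_tDy)
  also have "\<dots> = fls_map (\<lambda>p. Cy n (tDx p) - tDx (Cy n p)) phi"
    by (simp only: Cx_Cy_Jacobi)
  also have "\<dots> = fls_map (Cy n) Px - fls_map tDx (Wy n)"
    unfolding Px_def Wy_def
    by (rule fls_map_commutator) (simp_all add: derivation_zero derivation_Cy derivation_tDx)
  finally show ?thesis .
qed

lemma fls_map_Qphi_sq_mult:
  assumes D: "derivation D" and "Qphi * Qphi * W = fls_const m"
  shows "fls_map D Qphi * Qphi * W + Qphi * fls_map D Qphi * W + Qphi * Qphi * fls_map D W
    = fls_const (D m)"
  using arg_cong[OF assms(2), of "fls_map D"]
  by (simp only: derivation_mult[OF derivation_fls_map[OF D]]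
      fls_map_const[of D, OF derivation_zero[OF D]] distrib_right)

lemma poly_fls_J_poly:
  "poly_fls (J_poly mx my G) phi =
      - Qphi * fls_const mx - (2 * phi - fls_const zx) * (phi - fls_const zx) * fls_const mx
      - 2 * fls_const mx * Qphi * (fls_const zxy * phi + fls_const zyy)
      + Qphi * Qphi * fls_const G + (2 * phi - fls_const zx) * fls_const my
      + 2 * fls_const my * Qphi * (fls_const zxx * phi + fls_const zxy)"
  unfolding J_poly_def
  by (simp only: poly_fls_pCons poly_fls_0 fls_plus_const[symmetric] fls_minus_const[symmetric]
      fls_const_mult_const[symmetric] fls_const_uminus fls_const_numeral fls_const_1 fls_const_0)
    (use Qphi_def in algebra)

lemma J_poly_of_commutators:
  assumes Qx: "Qphi * Qphi * Wx n = fls_const mx" and Qy: "Qphi * Qphi * Wy n = fls_const my"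
  shows "J_poly mx my (Cy n zy + tDx my - tDy mx) = 0"
proof (rule phi.poly_fls_eq_0I)
  have CxR: "(2 * phi * Wx n - fls_const zx * Wx n) * Py + Qphi * fls_map (Cx n) Py = - Wx n"
    using derivation_Qphi_Py[OF derivation_fls_map[OF derivation_Cx]] fls_map_Qphi[OF derivation_Cx]
    by (simp add: Wx_def Cx_Var derivation_Cx fls_map_const[of "Cx n", OF derivation_zero[OF derivation_Cx]])
  have CyP: "(2 * phi * Wy n - fls_const zx * Wy n - fls_const (Cy n zy)) * Px
      + Qphi * fls_map (Cy n) Px = 0"
    using derivation_Qphi_Px[OF derivation_fls_map[OF derivation_Cy]] fls_map_Qphi[OF derivation_Cy]
    by (simp add: Wy_def Cy_Var derivation_Cy)
  have "- Qphi * fls_const mx - (2 * phi - fls_const zx) * (phi - fls_const zx) * fls_const mx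
      - 2 * fls_const mx * Qphi * (fls_const zxy * phi + fls_const zyy)
      + Qphi * Qphi * (fls_const (Cy n zy) + fls_const (tDx my) - fls_const (tDy mx))
      + (2 * phi - fls_const zx) * fls_const my
      + 2 * fls_const my * Qphi * (fls_const zxx * phi + fls_const zxy) = 0"
    by (rule Jacobi_ring_identity[OF Qphi_def Qphi_Px Py_eq Qx Qy CxR CyP
          fls_map_Qphi_sq_mult[OF derivation_tDy Qx, unfolded fls_map_tDy_Qphi]
          fls_map_Qphi_sq_mult[OF derivation_tDx Qy, unfolded fls_map_tDx_Qphi] Wx_Wy_Jacobi])
  then show "poly_fls (J_poly mx my (Cy n zy + tDx my - tDy mx)) phi $$ i = 0" for i
    by (simp only: poly_fls_J_poly fls_plus_const fls_minus_const) simp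
qed

lemma commutator_series_vanish: "Wx n = 0" "Wy n = 0" "Cy n zy = 0"
proof -
  define mx where "mx = (Qphi * Qphi * Wx n) $$ 0"
  define my where "my = (Qphi * Qphi * Wy n) $$ 0"
  have Qx: "Qphi * Qphi * Wx n = fls_const mx"
    unfolding mx_def using Qphi_sq_Wx_in_range Wx_nth_low by (rule Qphi_sq_const)
  have Qy: "Qphi * Qphi * Wy n = fls_const my"
    unfolding my_def using Qphi_sq_Wy_in_range Wy_nth_low by (rule Qphi_sq_const)
  from J_poly_of_commutators[OF Qx Qy]
  have "mx = 0" "my = 0" "Cy n zy + tDx my - tDy mx = 0"
    by (rule J_poly_eq_0D)+
  with Qx Qy Qphi_nonzero show "Wx n = 0" "Wy n = 0" "Cy n zy = 0"
    by (simp_all add: derivation_zero[OF derivation_tDx] derivation_zero[OF derivation_tDy])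
qed

lemma Cx_eq_0: "Cx n p = 0"
proof (rule derivation_eq_0I[OF derivation_Cx])
  fix v
  show "Cx n (Var v) = 0"
  proof (cases v)
    case (PhiC j)
    have "Wx n $$ (int j + 4) = 0"
      by (simp add: commutator_series_vanish)
    with PhiC show ?thesis
      by (simp add: Wx_def derivation_Cx phi_nth_PhiC)
  qed (simp_all add: Cx_Var)
qed

lemma Sfield_tDx_power: "Sfield n ((tDx ^^ a) p) = (tDx ^^ a) (Sfield n p)"
  using Cx_eq_0 by (induction a) (simp_all add: Cx_def)

lemma Cy_eq_0: "Cy n p = 0"
proof (rule derivation_eq_0I[OF derivation_Cy])
  fix v
  show "Cy n (Var v) = 0"
  proof (cases v)
    case (PhiC j)
    have "Wy n $$ (int j + 4) = 0"
      by (simp add: commutator_series_vanish)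
    with PhiC show ?thesis
      by (simp add: Wy_def derivation_Cy phi_nth_PhiC)
  next
    case (ZC a b)
    have "Sfield n zyy = tDy (tDy (Zgen n))"
      using commutator_series_vanish(3)[of n] by (simp add: Cy_def)
    then have "Cy n (Var (ZC a True)) = 0"
      by (simp add: Cy_def Sfield_tDx_power tDy_tDx_power)
    with ZC show ?thesis
      by (cases b) (simp_all add: Cy_Var)
  qed (simp_all add: Cy_Var)
qed

theorem mainTheorem12:
  fixes n :: int
  assumes "n \<le> 2"
  shows "(\<forall>p. Sfield n (tDx p) = tDx (Sfield n p)) \<and>
         (\<forall>p. Sfield n (tDy p) = tDy (Sfield n p))"
  using Cx_eq_0[of n] Cy_eq_0[of n] by (simp add: Cx_def Cy_def)

end
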